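(* Let $d\ge2$ and let $\{\tau_e\}$ be i.i.d. non-negative edge weights on $\mathbb Z^d$. Fix $M>0$ and $k\in\mathbb N$. There exist constants $C>0$ and $C'\ge1$, depending only on $k$ and $d$, such that for every $e\in\mathcal E^d$, $$\mathbb P(e\text{ is }(k,M)\text{-large})\ \le\ C\,\big(\mathbb P(\tau_e\ge M/C')^{k}\big)^{d-1}.$$
   Context: $\mathcal E^d$ is the set of nearest-neighbor edges of $\mathbb Z^d$. For $e=\{a,b\}$ let $v_e$ be the endpoint of smaller $\ell^1$ norm. For $k\ge1$: ${S^e_k}'=\{z\in\mathbb Z^d:|v_e-z|_\infty=k\}$ and $S^e_k=\{\{u,w\}\in\mathcal E^d:u,w\in{S^e_k}'\}$; ${S^e_0}'$ is the set of endpoints of $e$ and $S^e_0=\{e\}$. For $u,w\in{S^e_h}'$, $T_{S^e_h}(u,w)$ is the minimum of $\sum_{e'\in\gamma}\tau_{e'}$ over self-avoiding paths $\gamma$ from $u$ to $w$ using only edges of $S^e_h$. The edge $e$ is $(k,M)$-large if for each $h=0,1,\dots,k$ there exist $u,w\in{S^e_h}'$ with $T_{S^e_h}(u,w)\ge M$. *)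

theory Defs
  imports "HOL-Probability.Probability"
begin

text \<open>Vertices of Z^d are integer lists of length d; edges are two-element sets of vertices.\<close>

type_synonym vtx = "int list"
type_synonym edge = "int list set"

definition Zd :: "nat \<Rightarrow> vtx set" where
  "Zd d = {x. length x = d}"

definition l1norm :: "vtx \<Rightarrow> int" where
  "l1norm x = sum_list (map abs x)"

definition linfnorm :: "vtx \<Rightarrow> int" where
  "linfnorm x = Max (insert 0 (set (map abs x)))"

definition vdiff :: "vtx \<Rightarrow> vtx \<Rightarrow> vtx" where
  "vdiff a b = map2 (-) a b"

definition Ed :: "nat \<Rightarrow> edge set" where
  "Ed d = {{a, b} | a b. a \<in> Zd d \<and> b \<in> Zd d \<and> l1norm (vdiff a b) = 1}"

definition ve :: "edge \<Rightarrow> vtx" where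
  "ve e = (SOME a. a \<in> e \<and> (\<forall>b\<in>e. l1norm a \<le> l1norm b))"

definition sphV :: "nat \<Rightarrow> edge \<Rightarrow> nat \<Rightarrow> vtx set" where
  "sphV d e k = (if k = 0 then e
     else {z \<in> Zd d. linfnorm (vdiff (ve e) z) = int k})"

definition sphE :: "nat \<Rightarrow> edge \<Rightarrow> nat \<Rightarrow> edge set" where
  "sphE d e k = (if k = 0 then {e}
     else {{u, w} | u w. {u, w} \<in> Ed d \<and> u \<in> sphV d e k \<and> w \<in> sphV d e k})"

definition saw :: "edge set \<Rightarrow> vtx \<Rightarrow> vtx \<Rightarrow> vtx list \<Rightarrow> bool" where
  "saw S u w p \<longleftrightarrow> p \<noteq> [] \<and> hd p = u \<and> last p = w \<and> distinct p \<and>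
     (\<forall>i < length p - 1. {p ! i, p ! Suc i} \<in> S)"

definition path_weight :: "(edge \<Rightarrow> real) \<Rightarrow> vtx list \<Rightarrow> real" where
  "path_weight t p = (\<Sum>i < length p - 1. t {p ! i, p ! Suc i})"

definition passT :: "(edge \<Rightarrow> real) \<Rightarrow> edge set \<Rightarrow> vtx \<Rightarrow> vtx \<Rightarrow> real" where
  "passT t S u w = Inf {path_weight t p | p. saw S u w p}"

definition large :: "nat \<Rightarrow> (edge \<Rightarrow> real) \<Rightarrow> edge \<Rightarrow> nat \<Rightarrow> real \<Rightarrow> bool" where
  "large d t e k M \<longleftrightarrow> (\<forall>h \<le> k. \<exists>u \<in> sphV d e h. \<exists>w \<in> sphV d e h.
      passT t (sphE d e h) u w \<ge> M)"

end

theory Submission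
  imports Defs
begin

text \<open>
  Put N = (2k+1)^d, an upper bound for the number of vertices of each sphere S'_h with h \<le> k.
  If T_{S_h}(u,w) \<ge> M, the edges of weight at least M/N must separate u from w in S_h, since
  otherwise a self-avoiding path through fewer than N lighter edges would join them.
  But S'_h is the boundary of a cube: it is covered by 2d faces, faces orthogonal to
  different axes intersect, and each face is a (d-1)-dimensional box, in which an edge cut
  separating two vertices has at least d-1 edges (one per direction, after translating
  a crossing edge along the directions in which the cut is invariant). Hence every cut
  separating two vertices of S'_h has at least d-1 edges. The spheres S_1, ..., S_k are
  edge-disjoint, so a (k,M)-large edge forces k(d-1) edges of weight at least M/N among the
  edges of these spheres, and a union bound over the at most 2^2^N such edge sets gives
  the claim with C = 2^2^N and C' = N.
\<close>

section \<open>Edge cuts and self-avoiding paths\<close>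

definition edge_cut :: "edge set \<Rightarrow> vtx set \<Rightarrow> edge set" where
  "edge_cut S A = {f \<in> S. \<exists>x y. f = {x, y} \<and> x \<in> A \<and> y \<notin> A}"

lemma edge_cut_mono: "S \<subseteq> S' \<Longrightarrow> edge_cut S A \<subseteq> edge_cut S' A"
  by (auto simp: edge_cut_def)

lemma finite_edge_cut: "finite S \<Longrightarrow> finite (edge_cut S A)"
  by (simp add: edge_cut_def)

lemma set_saw_subset: "saw S u w p \<Longrightarrow> set p \<subseteq> insert w (\<Union>S)"
proof
  fix x assume p: "saw S u w p" and "x \<in> set p"
  then obtain i where i: "i < length p" "x = p ! i"
    by (auto simp: in_set_conv_nth)
  show "x \<in> insert w (\<Union>S)"
  proof (cases "i < length p - 1")
    case True
    then have "{p ! i, p ! Suc i} \<in> S"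
      using p by (simp add: saw_def)
    then show ?thesis using i by blast
  next
    case False
    then have "i = length p - 1"
      using i(1) by linarith
    moreover have "p \<noteq> []"
      using i(1) by auto
    ultimately have "x = last p"
      using i(2) by (simp add: last_conv_nth)
    then show ?thesis
      using p by (simp add: saw_def)
  qed
qed

lemma finite_saw: "finite (\<Union>S) \<Longrightarrow> finite {p. saw S u w p}"
  using finite_subset_distinct[of "insert w (\<Union>S)"] set_saw_subset[of S u w]
  by (auto simp: saw_def intro: finite_subset[rotated])

lemma saw_mono: "saw S u w p \<Longrightarrow> S \<subseteq> S' \<Longrightarrow> saw S' u w p"
  by (auto simp: saw_def)

lemma passT_le_path_weight:
  assumes "finite (\<Union>S)" "saw S u w p"
  shows "passT t S u w \<le> path_weight t p"
proof -
  have "{path_weight t p | p. saw S u w p} = path_weight t ` {p. saw S u w p}"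
    by blast
  then have "bdd_below {path_weight t p | p. saw S u w p}"
    using finite_saw[OF assms(1)] by simp
  then show ?thesis
    unfolding passT_def using assms(2) by (blast intro: cInf_lower)
qed

lemma passT_less_if_light_saw:
  fixes \<theta> :: real
  assumes "finite V" "\<Union>S \<subseteq> V" "w \<in> V" "\<theta> > 0"
    and p: "saw {f \<in> S. t f < \<theta>} u w p"
  shows "passT t S u w < card V * \<theta>"
proof -
  have p_S: "saw S u w p"
    using p by (rule saw_mono) blast
  have "length p = card (set p)"
    using p by (simp add: saw_def distinct_card)
  also have "\<dots> \<le> card V"
    using set_saw_subset[OF p_S] assms(1-3) by (intro card_mono) auto
  moreover have "0 < card V"
    using assms(1,3) card_gt_0_iff by blast
  ultimately have len_p: "real (length p - 1) < card V"
    by simp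
  have "passT t S u w \<le> path_weight t p"
    using assms(1,2) p_S by (intro passT_le_path_weight) (auto intro: finite_subset)
  also have "\<dots> \<le> real (length p - 1) * \<theta>"
    unfolding path_weight_def using p
    by (intro order.trans[OF sum_bounded_above[of _ _ \<theta>]]) (auto simp: saw_def)
  also have "\<dots> < card V * \<theta>"
    using len_p assms(4) by (rule mult_strict_right_mono)
  finally show ?thesis .
qed

lemma rtranclp_imp_saw:
  assumes "(\<lambda>x y. {x, y} \<in> S)\<^sup>*\<^sup>* u w"
  shows "\<exists>p. saw S u w p"
  using assms
proof (induction rule: converse_rtranclp_induct)
  case base
  show ?case
    by (intro exI[of _ "[w]"]) (simp add: saw_def)
next
  case (step x y)
  then obtain q where q: "saw S y w q"
    by blast
  show ?case
  proof (cases "x \<in> set q")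
    case True
    \<comment> \<open>shortcut the loop through x\<close>
    then obtain n where n: "n < length q" "q ! n = x"
      by (auto simp: in_set_conv_nth)
    have "saw S x w (drop n q)"
      using q n by (auto simp: saw_def hd_drop_conv_nth)
    then show ?thesis by blast
  next
    case False
    have "saw S x w (x # q)"
      using q False step(1) by (auto simp: saw_def nth_Cons hd_conv_nth split: nat.split)
    then show ?thesis by blast
  qed
qed

lemma rtranclp_avoiding_if_edge_cuts_large:
  assumes "finite S"
    and cuts: "\<And>A. u \<in> A \<Longrightarrow> w \<notin> A \<Longrightarrow> n \<le> card (edge_cut S A)"
    and "card (S \<inter> B) < n"
  shows "(\<lambda>x y. {x, y} \<in> S - B)\<^sup>*\<^sup>* u w"
proof (rule ccontr)
  let ?R = "\<lambda>x y. {x, y} \<in> S - B"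
  define A where "A = {x. ?R\<^sup>*\<^sup>* u x}"
  assume "\<not> ?R\<^sup>*\<^sup>* u w"
  then have "w \<notin> A"
    by (simp add: A_def)
  moreover have "u \<in> A"
    by (simp add: A_def)
  ultimately have "n \<le> card (edge_cut S A)"
    by (intro cuts)
  moreover have "edge_cut S A \<subseteq> S \<inter> B"
    by (auto simp: edge_cut_def A_def intro: rtranclp.rtrancl_into_rtrancl)
  then have "card (edge_cut S A) \<le> card (S \<inter> B)"
    using assms(1) by (intro card_mono) auto
  ultimately show False
    using assms(3) by linarith
qed

section \<open>Edge cuts in integer boxes\<close>

definition int_box :: "nat \<Rightarrow> (nat \<Rightarrow> int) \<Rightarrow> (nat \<Rightarrow> int) \<Rightarrow> vtx set" where
  "int_box d lo hi = {z. length z = d \<and> (\<forall>j<d. lo j \<le> z ! j \<and> z ! j \<le> hi j)}"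

definition step_up :: "vtx \<Rightarrow> nat \<Rightarrow> vtx" where
  "step_up x j = x[j := x ! j + 1]"

definition box_edges :: "nat \<Rightarrow> (nat \<Rightarrow> int) \<Rightarrow> (nat \<Rightarrow> int) \<Rightarrow> edge set" where
  "box_edges d lo hi =
     {{x, step_up x j} | x j. j < d \<and> x \<in> int_box d lo hi \<and> step_up x j \<in> int_box d lo hi}"

definition crossing_step :: "nat \<Rightarrow> (nat \<Rightarrow> int) \<Rightarrow> (nat \<Rightarrow> int) \<Rightarrow> vtx set \<Rightarrow> vtx \<Rightarrow> nat \<Rightarrow> bool" where
  "crossing_step d lo hi A x j \<longleftrightarrow>
     x \<in> int_box d lo hi \<and> step_up x j \<in> int_box d lo hi \<and> (x \<in> A \<longleftrightarrow> step_up x j \<notin> A)"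

definition box_dir_invariant :: "nat \<Rightarrow> (nat \<Rightarrow> int) \<Rightarrow> (nat \<Rightarrow> int) \<Rightarrow> vtx set \<Rightarrow> nat \<Rightarrow> bool" where
  "box_dir_invariant d lo hi A j \<longleftrightarrow>
     (\<forall>x\<in>int_box d lo hi. \<forall>v\<in>{lo j..hi j}. x[j := v] \<in> A \<longleftrightarrow> x \<in> A)"

lemma int_exists_change_point:
  fixes f :: "int \<Rightarrow> bool"
  assumes "a \<le> b" "f a \<noteq> f b"
  shows "\<exists>t. a \<le> t \<and> t < b \<and> f t \<noteq> f (t + 1)"
  using assms
proof (induction "nat (b - a)" arbitrary: a)
  case 0
  then show ?case by auto
next
  case (Suc n)
  show ?case
  proof (cases "f a = f (a + 1)")
    case True
    with Suc.prems have "f (a + 1) \<noteq> f b" "a + 1 \<le> b" "n = nat (b - (a + 1))"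
      using Suc.hyps(2) by auto
    then obtain t where "a + 1 \<le> t" "t < b" "f t \<noteq> f (t + 1)"
      using Suc.hyps(1) by blast
    then show ?thesis
      by (intro exI[of _ t]) auto
  next
    case False
    then show ?thesis using Suc by (intro exI[of _ a]) auto
  qed
qed

lemma finite_int_box: "finite (int_box d lo hi)"
proof -
  have "int_box d lo hi \<subseteq> {xs. set xs \<subseteq> (\<Union>j<d. {lo j..hi j}) \<and> length xs = d}"
    by (fastforce simp: int_box_def in_set_conv_nth)
  then show ?thesis
    by (rule finite_subset) (intro finite_lists_length_eq, auto)
qed

lemma finite_box_edges: "finite (box_edges d lo hi)"
proof -
  have "box_edges d lo hi \<subseteq> Pow (int_box d lo hi)"
    by (auto simp: box_edges_def)
  then show ?thesis
    using finite_int_box by (meson finite_Pow_iff finite_subset)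
qed

lemma card_int_box_le:
  assumes "\<And>j. j < d \<Longrightarrow> hi j \<le> lo j + int m"
  shows "card (int_box d lo hi) \<le> (m + 1) ^ d"
proof -
  define L where "L = map lo [0..<d]"
  define S where "S = {xs. set xs \<subseteq> {0..int m} \<and> length xs = d}"
  have finite_S: "finite S"
    by (auto simp: S_def intro!: finite_lists_length_eq)
  have "int_box d lo hi \<subseteq> (\<lambda>xs. map2 (+) xs L) ` S"
  proof
    fix z assume "z \<in> int_box d lo hi"
    then have len: "length z = d" and bounds: "\<And>j. j < d \<Longrightarrow> lo j \<le> z ! j \<and> z ! j \<le> hi j"
      by (auto simp: int_box_def)
    have "map2 (-) z L \<in> S"
      using len bounds assms by (fastforce simp: S_def L_def in_set_conv_nth)
    moreover have "z = map2 (+) (map2 (-) z L) L"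
      by (rule nth_equalityI) (use len in \<open>auto simp: L_def\<close>)
    ultimately show "z \<in> (\<lambda>xs. map2 (+) xs L) ` S"
      by blast
  qed
  then have "card (int_box d lo hi) \<le> card ((\<lambda>xs. map2 (+) xs L) ` S)"
    using finite_S by (intro card_mono) auto
  also have "\<dots> \<le> card S"
    using finite_S by (rule card_image_le)
  also have "card S = (m + 1) ^ d"
    unfolding S_def by (subst card_lists_length_eq) (auto simp: nat_add_distrib)
  finally show ?thesis .
qed

lemma int_box_update:
  "x \<in> int_box d lo hi \<Longrightarrow> j < d \<Longrightarrow> v \<in> {lo j..hi j} \<Longrightarrow> x[j := v] \<in> int_box d lo hi"
  by (auto simp: int_box_def nth_list_update)

lemma length_step_up [simp]: "length (step_up x j) = length x"
  by (simp add: step_up_def)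

lemma nth_step_up: "i < length x \<Longrightarrow> step_up x j ! i = (if i = j then x ! i + 1 else x ! i)"
  by (simp add: step_up_def nth_list_update)

lemma step_up_update_swap: "i \<noteq> j \<Longrightarrow> step_up (x[j := v]) i = (step_up x i)[j := v]"
  by (simp add: step_up_def list_update_swap)

lemma doubleton_step_up_eq:
  assumes "j < length a" "j' < length b" "length a = length b"
    and "{a, step_up a j} = {b, step_up b j'}"
  shows "j = j' \<and> a = b"
proof (cases "a = b")
  case True
  then have "step_up a j ! j = step_up a j' ! j"
    using assms(4) by (auto simp: doubleton_eq_iff)
  then show ?thesis
    using True assms(1) by (auto simp: nth_step_up split: if_splits)
next
  case False
  then have "a = step_up b j'" "b = step_up a j"
    using assms(4) by (auto simp: doubleton_eq_iff)
  then have "a ! j = step_up (step_up a j) j' ! j"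
    by simp
  then show ?thesis
    using assms by (auto simp: nth_step_up split: if_splits)
qed

lemma crossing_step_in_edge_cut:
  "crossing_step d lo hi A x j \<Longrightarrow> j < d \<Longrightarrow> {x, step_up x j} \<in> edge_cut (box_edges d lo hi) A"
  unfolding crossing_step_def edge_cut_def box_edges_def
  by (cases "x \<in> A") (auto simp: insert_commute)

lemma box_dir_invariant_or_crossing_step:
  assumes j: "j < d"
  shows "box_dir_invariant d lo hi A j \<or> (\<exists>x. crossing_step d lo hi A x j)"
proof (rule disjCI)
  assume no_cross: "\<nexists>x. crossing_step d lo hi A x j"
  show "box_dir_invariant d lo hi A j"
    unfolding box_dir_invariant_def
  proof (intro ballI)
    fix x v assume x: "x \<in> int_box d lo hi" and v: "v \<in> {lo j..hi j}"
    have xj: "x ! j \<in> {lo j..hi j}" and len: "length x = d"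
      using x j by (auto simp: int_box_def)
    define f where "f t \<longleftrightarrow> x[j := t] \<in> A" for t
    have f_const: "f a = f b" if ab: "lo j \<le> a" "a \<le> b" "b \<le> hi j" for a b
    proof (rule ccontr)
      assume "f a \<noteq> f b"
      then obtain t where t: "a \<le> t" "t < b" "f t \<noteq> f (t + 1)"
        using int_exists_change_point[OF ab(2)] by blast
      have "step_up (x[j := t]) j = x[j := t + 1]"
        using len j by (simp add: step_up_def)
      moreover have "x[j := t] \<in> int_box d lo hi" "x[j := t + 1] \<in> int_box d lo hi"
        using t ab by (auto intro!: int_box_update x j)
      ultimately have "crossing_step d lo hi A (x[j := t]) j"
        using t(3) by (simp add: crossing_step_def f_def)
      then show False
        using no_cross by blast
    qed
    have "f v = f (x ! j)"
    proof (cases "v \<le> x ! j")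
      case True
      then show ?thesis using f_const[of v "x ! j"] v xj by simp
    next
      case False
      then show ?thesis using f_const[of "x ! j" v] v xj by simp
    qed
    then show "x[j := v] \<in> A \<longleftrightarrow> x \<in> A"
      by (simp add: f_def)
  qed
qed

lemma box_invariant_imp_constant:
  assumes inv: "\<And>j. j < d \<Longrightarrow> lo j < hi j \<Longrightarrow> box_dir_invariant d lo hi A j"
    and x: "x \<in> int_box d lo hi" and y: "y \<in> int_box d lo hi"
  shows "x \<in> A \<longleftrightarrow> y \<in> A"
proof -
  have lx: "length x = d" and ly: "length y = d"
    using x y by (auto simp: int_box_def)
  define z where "z n = take n y @ drop n x" for n
  \<comment> \<open>move from x to y one coordinate at a time\<close>
  have "z n \<in> int_box d lo hi \<and> (z n \<in> A \<longleftrightarrow> x \<in> A)" if "n \<le> d" for n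
    using that
  proof (induction n)
    case 0
    then show ?case using x by (simp add: z_def)
  next
    case (Suc n)
    then have IH: "z n \<in> int_box d lo hi" "z n \<in> A \<longleftrightarrow> x \<in> A" and n: "n < d"
      by auto
    have z_Suc: "z (Suc n) = (z n)[n := y ! n]"
      using lx ly n by (intro nth_equalityI) (auto simp: z_def nth_append nth_list_update)
    have yn: "y ! n \<in> {lo n..hi n}"
      using y n by (auto simp: int_box_def)
    have "z n \<in> A \<longleftrightarrow> (z n)[n := y ! n] \<in> A"
    proof (cases "lo n < hi n")
      case True
      then show ?thesis
        using inv[OF n] IH(1) yn by (auto simp: box_dir_invariant_def)
    next
      case False
      then have "y ! n = z n ! n"
        using yn IH(1) n by (force simp: int_box_def)
      then show ?thesis by simp
    qed
    then show ?case
      using IH z_Suc int_box_update[OF IH(1) n yn] by simp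
  qed
  from this[OF order_refl] have "z d \<in> A \<longleftrightarrow> x \<in> A"
    by blast
  moreover have "z d = y"
    using lx ly by (simp add: z_def)
  ultimately show ?thesis
    by simp
qed

lemma crossing_step_update:
  assumes cross: "crossing_step d lo hi A x i" and inv: "box_dir_invariant d lo hi A j"
    and j: "j < d" "i \<noteq> j" "v \<in> {lo j..hi j}"
  shows "crossing_step d lo hi A (x[j := v]) i"
proof -
  have box: "x \<in> int_box d lo hi" "step_up x i \<in> int_box d lo hi"
    and flip: "x \<in> A \<longleftrightarrow> step_up x i \<notin> A"
    using cross by (auto simp: crossing_step_def)
  have "x[j := v] \<in> A \<longleftrightarrow> x \<in> A" "(step_up x i)[j := v] \<in> A \<longleftrightarrow> step_up x i \<in> A"
    using inv box j(3) unfolding box_dir_invariant_def by blast+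
  moreover have "x[j := v] \<in> int_box d lo hi" "(step_up x i)[j := v] \<in> int_box d lo hi"
    using box j by (auto intro: int_box_update)
  ultimately show ?thesis
    using flip j(2) by (simp add: crossing_step_def step_up_update_swap)
qed

lemma exists_inj_crossing_steps:
  assumes x: "x \<in> int_box d lo hi" "x \<in> A" and y: "y \<in> int_box d lo hi" "y \<notin> A"
  shows "\<exists>step. inj_on step {j. j < d \<and> lo j < hi j} \<and>
    (\<forall>j \<in> {j. j < d \<and> lo j < hi j}. snd (step j) < d \<and> crossing_step d lo hi A (fst (step j)) (snd (step j)))"
proof -
  define D where "D = {j. j < d \<and> lo j < hi j}"
  define J where "J = {j \<in> D. box_dir_invariant d lo hi A j}"
  obtain i where i: "i \<in> D" "i \<notin> J"
    using box_invariant_imp_constant[of d lo hi A x y] x y unfolding D_def J_def by blast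
  have "\<exists>x. crossing_step d lo hi A x j" if "j \<in> D - J" for j
    using box_dir_invariant_or_crossing_step[of j d lo hi A] that by (auto simp: D_def J_def)
  then obtain xs where xs: "\<And>j. j \<in> D - J \<Longrightarrow> crossing_step d lo hi A (xs j) j"
    by metis
  define x0 where "x0 = xs i"
  have x0: "crossing_step d lo hi A x0 i"
    using xs i by (simp add: x0_def)
  \<comment> \<open>in a direction j along which A is invariant, use the crossing step of direction i
      translated so that its j-th coordinate differs from that of x0\<close>
  define w where "w j = (if x0 ! j = lo j then hi j else lo j)" for j
  define base where "base j = (if j \<in> J then x0[j := w j] else xs j)" for j
  define dir where "dir j = (if j \<in> J then i else j)" for j
  have w: "w j \<in> {lo j..hi j}" "w j \<noteq> x0 ! j" if "j \<in> D" for j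
    using that by (auto simp: w_def D_def)
  have cross: "crossing_step d lo hi A (base j) (dir j)" if j: "j \<in> D" for j
  proof (cases "j \<in> J")
    case True
    then have "i \<noteq> j" using i by blast
    then show ?thesis
      using True crossing_step_update[OF x0 _ _ _ w(1)[OF j]] j
      by (simp add: base_def dir_def J_def D_def)
  qed (use xs j in \<open>simp add: base_def dir_def\<close>)
  have dir_lt: "dir j < d" if "j \<in> D" for j
    using that i by (auto simp: dir_def D_def J_def)
  have base_off: "base j ! m = x0 ! m" if "j \<in> J \<or> j = i" "m \<noteq> j" for j m
    using that i by (auto simp: base_def x0_def)
  have base_on: "base j ! j \<noteq> x0 ! j" if "j \<in> J" for j
    using that w(2) x0 by (auto simp: base_def J_def D_def crossing_step_def int_box_def)
  have "inj_on (\<lambda>j. (base j, dir j)) D"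
  proof (rule inj_onI, rule ccontr)
    fix j1 j2 assume "(base j1, dir j1) = (base j2, dir j2)" and ne: "j1 \<noteq> j2"
    then have "j1 \<in> J \<or> j1 = i" "j2 \<in> J \<or> j2 = i" "base j1 = base j2"
      by (auto simp: dir_def split: if_splits)
    then show False
      using ne base_off base_on by metis
  qed
  then show ?thesis
    using cross dir_lt unfolding D_def by (intro exI[of _ "\<lambda>j. (base j, dir j)"]) auto
qed

lemma card_edge_cut_int_box:
  assumes "x \<in> int_box d lo hi" "x \<in> A" "y \<in> int_box d lo hi" "y \<notin> A"
  shows "card {j. j < d \<and> lo j < hi j} \<le> card (edge_cut (box_edges d lo hi) A)"
proof -
  let ?D = "{j. j < d \<and> lo j < hi j}"
  obtain step where inj: "inj_on step ?D"
    and step: "\<And>j. j \<in> ?D \<Longrightarrow> snd (step j) < d \<and> crossing_step d lo hi A (fst (step j)) (snd (step j))"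
    using exists_inj_crossing_steps[OF assms] by blast
  let ?edge = "\<lambda>j. {fst (step j), step_up (fst (step j)) (snd (step j))}"
  have "inj_on ?edge ?D"
  proof (rule inj_onI)
    fix j1 j2 assume j: "j1 \<in> ?D" "j2 \<in> ?D" and "?edge j1 = ?edge j2"
    then have "step j1 = step j2"
      using doubleton_step_up_eq[of "snd (step j1)" "fst (step j1)" "snd (step j2)" "fst (step j2)"]
        step[OF j(1)] step[OF j(2)] by (auto simp: crossing_step_def int_box_def prod_eq_iff)
    then show "j1 = j2"
      using inj j by (auto dest: inj_onD)
  qed
  then have "card ?D = card (?edge ` ?D)"
    by (simp add: card_image)
  also have "\<dots> \<le> card (edge_cut (box_edges d lo hi) A)"
    using step crossing_step_in_edge_cut finite_edge_cut[OF finite_box_edges]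
    by (intro card_mono) blast+
  finally show ?thesis .
qed

section \<open>Spheres around an edge\<close>

lemma length_ve: "e \<in> Ed d \<Longrightarrow> length (ve e) = d"
proof -
  assume "e \<in> Ed d"
  then obtain a b where e: "e = {a, b}" "a \<in> Zd d" "b \<in> Zd d"
    by (auto simp: Ed_def)
  have "\<exists>x. x \<in> e \<and> (\<forall>y\<in>e. l1norm x \<le> l1norm y)"
    using e(1) by (cases "l1norm a \<le> l1norm b") auto
  then have "ve e \<in> e"
    unfolding ve_def by (rule someI2_ex) blast
  then show ?thesis
    using e by (auto simp: Zd_def)
qed

lemma linfnorm_eq_iff:
  assumes "h > 0"
  shows "linfnorm v = h \<longleftrightarrow> (\<forall>x\<in>set v. \<bar>x\<bar> \<le> h) \<and> (\<exists>x\<in>set v. \<bar>x\<bar> = h)"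
proof -
  have "linfnorm v = Max (insert 0 (abs ` set v))"
    by (simp add: linfnorm_def)
  also have "\<dots> = h \<longleftrightarrow> h \<in> insert 0 (abs ` set v) \<and> (\<forall>a\<in>insert 0 (abs ` set v). a \<le> h)"
    by (rule Max_eq_iff) auto
  finally show ?thesis
    using assms by auto
qed

definition cube_shell :: "vtx \<Rightarrow> nat \<Rightarrow> vtx set" where
  "cube_shell c h = {z. length z = length c \<and> (\<forall>j<length c. \<bar>c ! j - z ! j\<bar> \<le> int h)
     \<and> (\<exists>j<length c. \<bar>c ! j - z ! j\<bar> = int h)}"

lemma sphV_eq_cube_shell:
  assumes "e \<in> Ed d" "h \<noteq> 0"
  shows "sphV d e h = cube_shell (ve e) h"
proof -
  have "set (vdiff (ve e) z) = (\<lambda>j. ve e ! j - z ! j) ` {..<d}" if "length z = d" for z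
    using that length_ve[OF assms(1)] by (force simp: vdiff_def set_conv_nth)
  then show ?thesis
    using assms length_ve[OF assms(1)]
    by (auto simp: sphV_def Zd_def cube_shell_def linfnorm_eq_iff)
qed

lemma sphE_eq:
  assumes "h \<noteq> 0"
  shows "sphE d e h = {f \<in> Ed d. f \<subseteq> sphV d e h}"
  using assms by (auto simp: sphE_def Ed_def)

lemma cube_shell_subset_int_box:
  assumes "h \<le> k"
  shows "cube_shell c h \<subseteq> int_box (length c) (\<lambda>j. c ! j - int k) (\<lambda>j. c ! j + int k)"
  using assms by (force simp: cube_shell_def int_box_def abs_le_iff)

lemma finite_cube_shell: "finite (cube_shell c h)"
  using cube_shell_subset_int_box[OF order_refl] finite_int_box by (rule finite_subset)

lemma card_cube_shell_le:
  assumes "h \<le> k"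
  shows "card (cube_shell c h) \<le> (2 * k + 1) ^ length c"
proof -
  have "card (cube_shell c h) \<le> card (int_box (length c) (\<lambda>j. c ! j - int k) (\<lambda>j. c ! j + int k))"
    using cube_shell_subset_int_box[OF assms] finite_int_box by (rule card_mono[rotated])
  also have "\<dots> \<le> (2 * k + 1) ^ length c"
    by (rule card_int_box_le) simp
  finally show ?thesis .
qed

lemma step_up_in_Ed:
  assumes "length x = d" "j < d"
  shows "{x, step_up x j} \<in> Ed d"
proof -
  have "l1norm (vdiff x (step_up x j)) = (\<Sum>i\<in>{0..<d}. if i = j then 1 else 0)"
    unfolding l1norm_def sum_list_sum_nth using assms
    by (intro sum.cong) (auto simp: vdiff_def nth_step_up)
  also have "\<dots> = 1"
    using assms(2) by simp
  finally show ?thesis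
    using assms unfolding Ed_def Zd_def by force
qed

definition face_lo :: "vtx \<Rightarrow> nat \<Rightarrow> nat \<Rightarrow> int \<Rightarrow> nat \<Rightarrow> int" where
  "face_lo c h i s j = (if j = i then c ! i + s * int h else c ! j - int h)"

definition face_hi :: "vtx \<Rightarrow> nat \<Rightarrow> nat \<Rightarrow> int \<Rightarrow> nat \<Rightarrow> int" where
  "face_hi c h i s j = (if j = i then c ! i + s * int h else c ! j + int h)"

abbreviation shell_face :: "vtx \<Rightarrow> nat \<Rightarrow> nat \<Rightarrow> int \<Rightarrow> vtx set" where
  "shell_face c h i s \<equiv> int_box (length c) (face_lo c h i s) (face_hi c h i s)"

lemma shell_face_subset:
  assumes "i < length c" "s \<in> {-1, 1}"
  shows "shell_face c h i s \<subseteq> cube_shell c h"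
proof
  fix z assume z: "z \<in> shell_face c h i s"
  then have bounds: "face_lo c h i s j \<le> z ! j \<and> z ! j \<le> face_hi c h i s j" if "j < length c" for j
    using that by (simp add: int_box_def)
  have "\<bar>c ! j - z ! j\<bar> \<le> int h" if "j < length c" for j
    using bounds[OF that] assms(2) by (cases "j = i") (auto simp: face_lo_def face_hi_def)
  moreover have "\<bar>c ! i - z ! i\<bar> = int h"
    using bounds[OF assms(1)] assms(2) by (auto simp: face_lo_def face_hi_def)
  ultimately show "z \<in> cube_shell c h"
    using z assms(1) by (auto simp: cube_shell_def int_box_def)
qed

lemma cube_shell_subset_faces:
  assumes "z \<in> cube_shell c h"
  shows "\<exists>i<length c. \<exists>s\<in>{-1, 1}. z \<in> shell_face c h i s"
proof -
  obtain i where i: "i < length c" "\<bar>c ! i - z ! i\<bar> = int h"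
    using assms by (auto simp: cube_shell_def)
  define s where "s = (if c ! i - z ! i = int h then -1 else (1::int))"
  have "z ! i = c ! i + s * int h"
    using i by (auto simp: s_def abs_if split: if_splits)
  then have "z \<in> shell_face c h i s"
    using assms by (auto simp: int_box_def cube_shell_def face_lo_def face_hi_def abs_le_iff)
  moreover have "s \<in> {-1, 1}"
    by (simp add: s_def)
  ultimately show ?thesis
    using i(1) by blast
qed

lemma shell_faces_meet:
  assumes "i < length c" "j < length c" "i \<noteq> j" "s \<in> {-1, 1}" "t \<in> {-1, 1}"
  shows "(c[i := c ! i + s * int h])[j := c ! j + t * int h] \<in> shell_face c h i s \<inter> shell_face c h j t"
  using assms by (auto simp: int_box_def face_lo_def face_hi_def nth_list_update)

lemma card_shell_face_directions:
  assumes "i < length c" "h \<noteq> 0"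
  shows "card {j. j < length c \<and> face_lo c h i s j < face_hi c h i s j} = length c - 1"
proof -
  have "{j. j < length c \<and> face_lo c h i s j < face_hi c h i s j} = {..<length c} - {i}"
    using assms(2) by (auto simp: face_lo_def face_hi_def)
  then show ?thesis
    using assms(1) by simp
qed

lemma box_edges_shell_face_subset:
  assumes "i < length c" "s \<in> {-1, 1}"
  shows "box_edges (length c) (face_lo c h i s) (face_hi c h i s)
    \<subseteq> {f \<in> Ed (length c). f \<subseteq> cube_shell c h}"
proof
  fix f assume "f \<in> box_edges (length c) (face_lo c h i s) (face_hi c h i s)"
  then obtain x j where f: "f = {x, step_up x j}" "j < length c"
    and x: "x \<in> shell_face c h i s" "step_up x j \<in> shell_face c h i s"
    by (auto simp: box_edges_def)
  have "f \<in> Ed (length c)"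
    using x(1) f step_up_in_Ed by (simp add: int_box_def)
  moreover have "f \<subseteq> cube_shell c h"
    using x f(1) shell_face_subset[OF assms] by blast
  ultimately show "f \<in> {f \<in> Ed (length c). f \<subseteq> cube_shell c h}"
    by blast
qed

lemma finite_shell_edges: "finite {f \<in> Ed d. f \<subseteq> cube_shell c h}"
proof -
  have "{f \<in> Ed d. f \<subseteq> cube_shell c h} \<subseteq> Pow (cube_shell c h)"
    by blast
  then show ?thesis
    using finite_cube_shell by (meson finite_Pow_iff finite_subset)
qed

lemma shell_face_subset_or_disjoint:
  assumes "h \<noteq> 0" "i < length c" "s \<in> {-1, 1}"
    and few: "card (edge_cut {f \<in> Ed (length c). f \<subseteq> cube_shell c h} A) < length c - 1"
  shows "shell_face c h i s \<subseteq> A \<or> shell_face c h i s \<inter> A = {}"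
proof (rule ccontr)
  let ?d = "length c"
  assume "\<not> (shell_face c h i s \<subseteq> A \<or> shell_face c h i s \<inter> A = {})"
  then obtain x y where "x \<in> shell_face c h i s" "x \<in> A" "y \<in> shell_face c h i s" "y \<notin> A"
    by blast
  then have "card {j. j < ?d \<and> face_lo c h i s j < face_hi c h i s j}
      \<le> card (edge_cut (box_edges ?d (face_lo c h i s) (face_hi c h i s)) A)"
    by (rule card_edge_cut_int_box)
  also have "\<dots> \<le> card (edge_cut {f \<in> Ed ?d. f \<subseteq> cube_shell c h} A)"
    using box_edges_shell_face_subset[OF assms(2,3)] finite_edge_cut[OF finite_shell_edges]
    by (intro card_mono edge_cut_mono)
  finally show False
    using few card_shell_face_directions[OF assms(2,1)] by simp
qed

lemma card_edge_cut_cube_shell: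
  assumes "length c \<ge> 2" "h \<noteq> 0"
    and u: "u \<in> cube_shell c h" "u \<in> A" and w: "w \<in> cube_shell c h" "w \<notin> A"
  shows "length c - 1 \<le> card (edge_cut {f \<in> Ed (length c). f \<subseteq> cube_shell c h} A)"
proof (rule ccontr)
  let ?d = "length c"
  assume "\<not> ?d - 1 \<le> card (edge_cut {f \<in> Ed ?d. f \<subseteq> cube_shell c h} A)"
  then have one_side: "shell_face c h i s \<subseteq> A \<or> shell_face c h i s \<inter> A = {}"
    if "i < ?d" "s \<in> {-1, 1}" for i s
    using shell_face_subset_or_disjoint[OF assms(2) that] by simp
  have same_side: "shell_face c h i s \<subseteq> A \<longleftrightarrow> shell_face c h j t \<subseteq> A"
    if "i < ?d" "j < ?d" "i \<noteq> j" "s \<in> {-1, 1}" "t \<in> {-1, 1}" for i j s t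
    using shell_faces_meet[OF that] one_side[OF that(1,4)] one_side[OF that(2,5)] by blast
  have all_same_side: "shell_face c h i s \<subseteq> A \<longleftrightarrow> shell_face c h 0 1 \<subseteq> A"
    if "i < ?d" "s \<in> {-1, 1}" for i s
  proof (cases "i = 0")
    case True
    then show ?thesis
      using same_side[of i 1 s 1] same_side[of 1 0 1 1] that assms(1) by simp
  next
    case False
    have "0 < ?d"
      using that(1) by linarith
    then show ?thesis
      using same_side[of i 0 s 1] that False by simp
  qed
  obtain iu su where iu: "iu < ?d" "su \<in> {-1, 1}" "u \<in> shell_face c h iu su"
    using cube_shell_subset_faces[OF u(1)] by blast
  obtain iw sw where iw: "iw < ?d" "sw \<in> {-1, 1}" "w \<in> shell_face c h iw sw"
    using cube_shell_subset_faces[OF w(1)] by blast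
  have "shell_face c h iu su \<subseteq> A"
    using one_side[OF iu(1,2)] iu(3) u(2) by blast
  moreover have "\<not> shell_face c h iw sw \<subseteq> A"
    using iw(3) w(2) by blast
  ultimately show False
    using all_same_side[OF iu(1,2)] all_same_side[OF iw(1,2)] by simp
qed

section \<open>Heavy edges around a large edge\<close>

lemma exists_subset_Union_disjoint_family:
  assumes "finite H" "disjoint_family_on S H" "\<And>h. h \<in> H \<Longrightarrow> n \<le> card (S h)"
  shows "\<exists>G \<subseteq> (\<Union>h\<in>H. S h). finite G \<and> card G = card H * n"
proof -
  have "\<exists>F. F \<subseteq> S h \<and> finite F \<and> card F = n" if "h \<in> H" for h
    using assms(3)[OF that] by (meson obtain_subset_with_card_n)
  then obtain F where F: "\<And>h. h \<in> H \<Longrightarrow> F h \<subseteq> S h \<and> finite (F h) \<and> card (F h) = n"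
    by metis
  have "F h \<inter> F j = {}" if "h \<in> H" "j \<in> H" "h \<noteq> j" for h j
    using F[OF that(1)] F[OF that(2)] assms(2) that unfolding disjoint_family_on_def by blast
  then have "card (\<Union>h\<in>H. F h) = (\<Sum>h\<in>H. card (F h))"
    using assms(1) F by (intro card_UN_disjoint) auto
  also have "\<dots> = card H * n"
    using F by simp
  finally show ?thesis
    using assms(1) F by (intro exI[of _ "\<Union>h\<in>H. F h"]) auto
qed

lemma heavy_edges_on_sphere:
  assumes "d \<ge> 2" "e \<in> Ed d" "h \<noteq> 0"
    and u: "u \<in> sphV d e h" and w: "w \<in> sphV d e h"
    and T: "M \<le> passT t (sphE d e h) u w" and "M > 0"
    and N: "card (sphV d e h) \<le> N"
  shows "d - 1 \<le> card {f \<in> sphE d e h. M / real N \<le> t f}"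
proof (rule ccontr)
  let ?V = "sphV d e h" and ?S = "sphE d e h"
  define \<theta> where "\<theta> = M / real N"
  define B where "B = {f. \<theta> \<le> t f}"
  assume "\<not> d - 1 \<le> card {f \<in> ?S. M / real N \<le> t f}"
  then have few_heavy: "card (?S \<inter> B) < d - 1"
    by (simp add: B_def \<theta>_def Int_def conj_commute)
  have V: "?V = cube_shell (ve e) h" and S: "?S = {f \<in> Ed d. f \<subseteq> ?V}"
    using sphV_eq_cube_shell[OF assms(2,3)] sphE_eq[OF assms(3)] by simp_all
  have finite_V: "finite ?V" and finite_S: "finite ?S" and Union_S: "\<Union>?S \<subseteq> ?V"
    using V S finite_cube_shell finite_shell_edges by auto
  have cuts: "d - 1 \<le> card (edge_cut ?S A)" if "u \<in> A" "w \<notin> A" for A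
    using card_edge_cut_cube_shell[of "ve e" h u A w] assms(1,3) u w that V S
    by (simp add: length_ve[OF assms(2)])
  have "(\<lambda>x y. {x, y} \<in> ?S - B)\<^sup>*\<^sup>* u w"
    using finite_S cuts few_heavy by (rule rtranclp_avoiding_if_edge_cuts_large)
  then obtain p where "saw (?S - B) u w p"
    using rtranclp_imp_saw by blast
  moreover have "?S - B = {f \<in> ?S. t f < \<theta>}"
    by (auto simp: B_def)
  ultimately have p: "saw {f \<in> ?S. t f < \<theta>} u w p"
    by simp
  have "0 < card ?V"
    using u finite_V card_gt_0_iff by blast
  then have N_pos: "real N > 0"
    using N by simp
  then have "\<theta> > 0"
    using \<open>M > 0\<close> by (simp add: \<theta>_def)
  then have "passT t ?S u w < card ?V * \<theta>"
    using p by (rule passT_less_if_light_saw[OF finite_V Union_S w])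
  also have "\<dots> \<le> real N * \<theta>"
    using N \<open>\<theta> > 0\<close> by (intro mult_right_mono) auto
  also have "\<dots> = M"
    using N_pos by (simp add: \<theta>_def)
  finally show False
    using T by simp
qed

lemma disjoint_sphE:
  assumes "h1 \<noteq> 0" "h2 \<noteq> 0" "h1 \<noteq> h2"
  shows "sphE d e h1 \<inter> sphE d e h2 = {}"
  using assms by (auto simp: sphE_eq sphV_def Ed_def)

lemma sphE_Union_subset_Pow_int_box:
  assumes "e \<in> Ed d"
  shows "(\<Union>h\<in>{1..k}. sphE d e h) \<subseteq> Pow (int_box d (\<lambda>j. ve e ! j - int k) (\<lambda>j. ve e ! j + int k))"
proof -
  have "sphE d e h \<subseteq> Pow (cube_shell (ve e) h)" if "h \<in> {1..k}" for h
    using that assms by (auto simp: sphE_eq sphV_eq_cube_shell)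
  then show ?thesis
    using cube_shell_subset_int_box[of _ k "ve e"] length_ve[OF assms] by fastforce
qed

lemma finite_sphE_Union: "e \<in> Ed d \<Longrightarrow> finite (\<Union>h\<in>{1..k}. sphE d e h)"
  using sphE_Union_subset_Pow_int_box finite_int_box by (metis finite_Pow_iff finite_subset)

lemma card_Pow_sphE_Union_le:
  assumes "e \<in> Ed d"
  shows "card (Pow (\<Union>h\<in>{1..k}. sphE d e h)) \<le> 2 ^ 2 ^ (2 * k + 1) ^ d"
proof -
  let ?B = "int_box d (\<lambda>j. ve e ! j - int k) (\<lambda>j. ve e ! j + int k)"
  have "card (Pow (\<Union>h\<in>{1..k}. sphE d e h)) = 2 ^ card (\<Union>h\<in>{1..k}. sphE d e h)"
    using finite_sphE_Union[OF assms] by (rule card_Pow)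
  also have "\<dots> \<le> 2 ^ card (Pow ?B)"
    using sphE_Union_subset_Pow_int_box[OF assms] finite_int_box
    by (intro power_increasing card_mono) auto
  also have "\<dots> = 2 ^ 2 ^ card ?B"
    using finite_int_box by (simp add: card_Pow)
  also have "\<dots> \<le> 2 ^ 2 ^ (2 * k + 1) ^ d"
    by (intro power_increasing card_int_box_le) auto
  finally show ?thesis .
qed

lemma large_imp_heavy_edges:
  assumes "d \<ge> 2" "e \<in> Ed d" "M > 0" "large d t e k M"
  shows "\<exists>G \<in> {G. G \<subseteq> (\<Union>h\<in>{1..k}. sphE d e h) \<and> card G = k * (d - 1)}.
    \<forall>f\<in>G. t f \<in> {M / real ((2 * k + 1) ^ d)..}"
proof -
  let ?heavy = "\<lambda>h. {f \<in> sphE d e h. M / real ((2 * k + 1) ^ d) \<le> t f}"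
  have "d - 1 \<le> card (?heavy h)" if h: "h \<in> {1..k}" for h
  proof -
    obtain u w where uw: "u \<in> sphV d e h" "w \<in> sphV d e h" "M \<le> passT t (sphE d e h) u w"
      using assms(4) h unfolding large_def by auto
    have "h \<noteq> 0"
      using h by simp
    moreover have "card (sphV d e h) \<le> (2 * k + 1) ^ d"
      using h card_cube_shell_le[of h k "ve e"] assms(2)
      by (simp add: sphV_eq_cube_shell length_ve)
    ultimately show ?thesis
      using heavy_edges_on_sphere[OF assms(1,2) _ uw assms(3)] by blast
  qed
  moreover have "disjoint_family_on ?heavy {1..k}"
    unfolding disjoint_family_on_def
  proof (intro ballI impI)
    fix h1 h2 assume "h1 \<in> {1..k}" "h2 \<in> {1..k}" "h1 \<noteq> h2"
    then have "sphE d e h1 \<inter> sphE d e h2 = {}"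
      by (intro disjoint_sphE) auto
    then show "?heavy h1 \<inter> ?heavy h2 = {}"
      by blast
  qed
  ultimately obtain G where "G \<subseteq> (\<Union>h\<in>{1..k}. ?heavy h)" "card G = card {1..k} * (d - 1)"
    using exists_subset_Union_disjoint_family[of "{1..k}" ?heavy "d - 1"] by auto
  then show ?thesis
    by (intro bexI[of _ G]) auto
qed

section \<open>The union bound\<close>

lemma measure_PiM_le_union_bound:
  fixes \<mu> :: "'a measure"
  assumes "prob_space \<mu>" "finite \<G>" "B \<in> sets \<mu>"
    and \<G>: "\<And>G. G \<in> \<G> \<Longrightarrow> G \<subseteq> I \<and> finite G \<and> card G = m"
    and E: "E \<subseteq> space (\<Pi>\<^sub>M i\<in>I. \<mu>)" "\<And>\<omega>. \<omega> \<in> E \<Longrightarrow> \<exists>G\<in>\<G>. \<forall>i\<in>G. \<omega> i \<in> B"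
  shows "measure (\<Pi>\<^sub>M i\<in>I. \<mu>) E \<le> card \<G> * measure \<mu> B ^ m"
proof -
  interpret product_prob_space "\<lambda>_. \<mu>" I
    by (rule product_prob_spaceI) (rule assms(1))
  let ?P = "\<Pi>\<^sub>M i\<in>I. \<mu>"
  define cyl where "cyl G = prod_emb I (\<lambda>_. \<mu>) G (\<Pi>\<^sub>E i\<in>G. B)" for G
  have cyl_sets: "cyl G \<in> sets ?P" if "G \<in> \<G>" for G
    unfolding cyl_def using \<G>[OF that] assms(3) by (intro sets_PiM_I) auto
  have cyl_measure: "measure ?P (cyl G) = measure \<mu> B ^ m" if "G \<in> \<G>" for G
    unfolding cyl_def using \<G>[OF that] assms(3) by (subst measure_PiM_emb) auto
  have "E \<subseteq> (\<Union>G\<in>\<G>. cyl G)"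
  proof
    fix \<omega> assume "\<omega> \<in> E"
    then obtain G where "G \<in> \<G>" "\<forall>i\<in>G. \<omega> i \<in> B" "\<omega> \<in> space ?P"
      using E by blast
    then show "\<omega> \<in> (\<Union>G\<in>\<G>. cyl G)"
      by (auto simp: cyl_def prod_emb_def space_PiM)
  qed
  then have "measure ?P E \<le> measure ?P (\<Union>G\<in>\<G>. cyl G)"
    using assms(2) cyl_sets by (intro finite_measure_mono) auto
  also have "\<dots> \<le> (\<Sum>G\<in>\<G>. measure ?P (cyl G))"
    using assms(2) cyl_sets by (intro measure_UNION_le) auto
  also have "\<dots> = card \<G> * measure \<mu> B ^ m"
    using cyl_measure by simp
  finally show ?thesis .
qed

lemma prob_large_le:
  fixes \<mu> :: "real measure"
  assumes "d \<ge> 2" "prob_space \<mu>" "sets \<mu> = sets borel" "M > 0" "e \<in> Ed d"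
  shows "measure (\<Pi>\<^sub>M f \<in> Ed d. \<mu>) {\<omega> \<in> space (\<Pi>\<^sub>M f \<in> Ed d. \<mu>). large d \<omega> e k M}
    \<le> card (Pow (\<Union>h\<in>{1..k}. sphE d e h)) * measure \<mu> {M / real ((2 * k + 1) ^ d)..} ^ (k * (d - 1))"
proof -
  let ?P = "\<Pi>\<^sub>M f \<in> Ed d. \<mu>"
  let ?W = "\<Union>h\<in>{1..k}. sphE d e h"
  define \<G> where "\<G> = {G. G \<subseteq> ?W \<and> card G = k * (d - 1)}"
  have finite_W: "finite ?W"
    using assms(5) by (rule finite_sphE_Union)
  have W_Ed: "?W \<subseteq> Ed d"
    by (auto simp: sphE_def)
  have \<G>_Pow: "\<G> \<subseteq> Pow ?W"
    by (auto simp: \<G>_def)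
  have "measure ?P {\<omega> \<in> space ?P. large d \<omega> e k M}
      \<le> card \<G> * measure \<mu> {M / real ((2 * k + 1) ^ d)..} ^ (k * (d - 1))"
  proof (rule measure_PiM_le_union_bound)
    show "finite \<G>"
      using \<G>_Pow finite_W by (meson finite_Pow_iff finite_subset)
    show "G \<subseteq> Ed d \<and> finite G \<and> card G = k * (d - 1)" if "G \<in> \<G>" for G
      using that W_Ed finite_W by (auto simp: \<G>_def intro: finite_subset)
    show "\<exists>G\<in>\<G>. \<forall>f\<in>G. \<omega> f \<in> {M / real ((2 * k + 1) ^ d)..}"
      if "\<omega> \<in> {\<omega> \<in> space ?P. large d \<omega> e k M}" for \<omega>
      using that large_imp_heavy_edges[OF assms(1,5,4)] unfolding \<G>_def by blast
  qed (use assms(2,3) in auto)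
  also have "\<dots> \<le> card (Pow ?W) * measure \<mu> {M / real ((2 * k + 1) ^ d)..} ^ (k * (d - 1))"
    using card_mono[OF _ \<G>_Pow] finite_W by (intro mult_right_mono) simp_all
  finally show ?thesis .
qed

theorem lemma3p2:
  fixes d k :: nat
  assumes "d \<ge> 2"
  shows "\<exists>C::real. C > 0 \<and> (\<exists>C'::real. C' \<ge> 1 \<and>
    (\<forall>(\<mu> :: real measure) (M :: real).
       prob_space \<mu> \<and> sets \<mu> = sets borel \<and> (AE x in \<mu>. 0 \<le> x) \<and> M > 0 \<longrightarrow>
       (\<forall>e \<in> Ed d.
          measure (\<Pi>\<^sub>M f \<in> Ed d. \<mu>)
            {\<omega> \<in> space (\<Pi>\<^sub>M f \<in> Ed d. \<mu>). large d \<omega> e k M}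
          \<le> C * (measure \<mu> {M / C'..} ^ k) ^ (d - 1))))"
proof (intro exI conjI allI impI ballI)
  define N where "N = (2 * k + 1) ^ d"
  show "(0::real) < 2 ^ 2 ^ N" and "1 \<le> real N"
    by (simp_all add: N_def)
  fix \<mu> :: "real measure" and M :: real and e
  assume \<mu>: "prob_space \<mu> \<and> sets \<mu> = sets borel \<and> (AE x in \<mu>. 0 \<le> x) \<and> M > 0"
    and e: "e \<in> Ed d"
  have "card (Pow (\<Union>h\<in>{1..k}. sphE d e h)) \<le> 2 ^ 2 ^ N"
    unfolding N_def using e by (rule card_Pow_sphE_Union_le)
  then have "real (card (Pow (\<Union>h\<in>{1..k}. sphE d e h))) \<le> 2 ^ 2 ^ N"
    by (simp flip: of_nat_le_iff)
  with prob_large_le[OF assms _ _ _ e, of \<mu> M k] \<mu>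
  show "measure (\<Pi>\<^sub>M f \<in> Ed d. \<mu>) {\<omega> \<in> space (\<Pi>\<^sub>M f \<in> Ed d. \<mu>). large d \<omega> e k M}
      \<le> 2 ^ 2 ^ N * (measure \<mu> {M / real N..} ^ k) ^ (d - 1)"
    unfolding N_def power_mult by (meson mult_right_mono order.trans zero_le_power measure_nonneg)
qed

end
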